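(* With $Y=\min\{a_2g_{sr},g_{rd}\}$ and $\bar C_{s_2,\mathrm{SC}}(\rho)=\tfrac12\mathbb E[\log_2(1+\rho Y)]$, \begin{align*} \lim_{\rho\to\infty}\Big[\bar C_{s_2,\mathrm{SC}}(\rho)-\tfrac12\log_2\rho\Big]=\frac{1}{2\ln2}&\sum_{\substack{k_0+\cdots+k_{m_{sr}}=N_r\\ k_0\neq N_r}}\ \sum_{\substack{q_0+\cdots+q_{m_{rd}}=N_d\\ q_0\neq N_d}}\binom{N_r}{k_0,\ldots,k_{m_{sr}}}\binom{N_d}{q_0,\ldots,q_{m_{rd}}}(-1)^{N_r+N_d-k_0-q_0}\\ &\times\Big[\prod_{\mu=0}^{m_{sr}-1}\Big(\tfrac{1}{\mu!}\Big)^{k_{\mu+1}}\Big]\Big(\tfrac{m_{sr}}{a_2\Omega_{sr}}\Big)^{\tau}\Big[\prod_{\varepsilon=0}^{m_{rd}-1}\Big(\tfrac{1}{\varepsilon!}\Big)^{q_{\varepsilon+1}}\Big]\Big(\tfrac{m_{rd}}{\Omega_{rd}}\Big)^{\upsilon}\frac{1}{\alpha_{k_0,q_0}^{\tau+\upsilon}}\\ &\times\Big[\Gamma(\tau+\upsilon+1)\{\psi(\tau+\upsilon+1)-\ln\alpha_{k_0,q_0}\}-(\tau+\upsilon)\Gamma(\tau+\upsilon)\{\psi(\tau+\upsilon)-\ln\alpha_{k_0,q_0}\}\Big], \end{align*} where the second term in the last bracket is taken to be $0$ when $\tau+\upsilon=0$. In particular, $\bar C_{s_1,\mathrm{SC}}+\bar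 C_{s_2,\mathrm{SC}}=\tfrac12\log_2\rho+O(1)$ as $\rho\to\infty$, where $\bar C_{s_1,\mathrm{SC}}=\tfrac12\mathbb E[\log_2(1+\frac{a_1\rho X}{a_2\rho X+1})]$ with $X=\min\{g_{sr},g_{sd}\}$.
   Context: Let $N_r,N_d$ be positive integers, $m_{sr},m_{sd},m_{rd}$ positive integers, and $\Omega_{sr},\Omega_{sd},\Omega_{rd}>0$. Let $\{G_{sr,i}\}_{i=1}^{N_r}$, $\{G_{sd,j}\}_{j=1}^{N_d}$, $\{G_{rd,k}\}_{k=1}^{N_d}$ be mutually independent random variables, where each $G_{sr,i}$ has the Gamma density $\frac{(m_{sr}/\Omega_{sr})^{m_{sr}}x^{m_{sr}-1}}{\Gamma(m_{sr})}e^{-m_{sr}x/\Omega_{sr}}$, $x>0$, and analogously $G_{sd,j}$ with $(m_{sd},\Omega_{sd})$ and $G_{rd,k}$ with $(m_{rd},\Omega_{rd})$. SC gains: $g_{sr}=\max_i G_{sr,i}$, $g_{sd}=\max_j G_{sd,j}$, $g_{rd}=\max_k G_{rd,k}$. Let $a_1,a_2\in(0,1)$ with $a_1+a_2=1$, $a_1>a_2$. Sums over $k_0+\cdots+k_m=N$, $k_0\ne N$ run over nonnegative integer tuples; $\binom{N}{k_0,\ldots,k_m}$ is the multinomial coefficient; $\tau=\sum_{\mu=0}^{m_{sr}-1}\mu k_{\mu+1}$, $\upsilon=\sum_{\varepsilon=0}^{m_{rd}-1}\varepsilon q_{\varepsilon+1}$, $\alpha_{k_0,q_0}=\frac{(N_r-k_0)m_{sr}}{a_2\Omega_{sr}}+\frac{(N_d-q_0)m_{rd}}{\Omega_{rd}}$;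 $\psi$ is the digamma function. *)

theory Defs
  imports "HOL-Probability.Probability" "HOL-Library.Landau_Symbols"
begin

definition gamma_pdf :: "nat \<Rightarrow> real \<Rightarrow> real \<Rightarrow> real" where
  "gamma_pdf m \<Omega> x = (if x > 0 then
     (real m / \<Omega>) ^ m * x ^ (m - 1) / Gamma (real m) * exp (- real m * x / \<Omega>) else 0)"

definition tuples :: "nat \<Rightarrow> nat \<Rightarrow> (nat \<Rightarrow> nat) set" where
  "tuples N m = {k. (\<forall>i>m. k i = 0) \<and> (\<Sum>i\<le>m. k i) = N \<and> k 0 \<noteq> N}"

definition multinom :: "nat \<Rightarrow> nat \<Rightarrow> (nat \<Rightarrow> nat) \<Rightarrow> real" where
  "multinom N m k = fact N / (\<Prod>i\<le>m. fact (k i))"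

definition wsum :: "nat \<Rightarrow> (nat \<Rightarrow> nat) \<Rightarrow> nat" where
  "wsum m k = (\<Sum>\<mu><m. \<mu> * k (\<mu> + 1))"

definition limit_const ::
  "nat \<Rightarrow> nat \<Rightarrow> nat \<Rightarrow> nat \<Rightarrow> real \<Rightarrow> real \<Rightarrow> real \<Rightarrow> real" where
  "limit_const Nr Nd msr mrd \<Omega>sr \<Omega>rd a2 =
    1 / (2 * ln 2) *
    (\<Sum>k\<in>tuples Nr msr. \<Sum>q\<in>tuples Nd mrd.
      (let \<tau> = wsum msr k; \<upsilon> = wsum mrd q;
           \<alpha> = (real Nr - real (k 0)) * real msr / (a2 * \<Omega>sr)
               + (real Nd - real (q 0)) * real mrd / \<Omega>rd;
           s = \<tau> + \<upsilon> in
       multinom Nr msr k * multinom Nd mrd q * (-1) ^ (Nr - k 0 + (Nd - q 0))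
       * (\<Prod>\<mu><msr. (1 / fact \<mu>) ^ k (\<mu> + 1)) * (real msr / (a2 * \<Omega>sr)) ^ \<tau>
       * (\<Prod>\<epsilon><mrd. (1 / fact \<epsilon>) ^ q (\<epsilon> + 1)) * (real mrd / \<Omega>rd) ^ \<upsilon>
       * (1 / \<alpha> ^ s)
       * (Gamma (real s + 1) * (Digamma (real s + 1) - ln \<alpha>)
          - (if s = 0 then 0 else real s * Gamma (real s) * (Digamma (real s) - ln \<alpha>)))))"

end

theory Submission
  imports Defs
begin

text \<open>For integer \<open>m\<close> the Nakagami-m power gains are Erlang distributed, so by independence
  \<open>Y = min {a\<^sub>2 g\<^sub>s\<^sub>r, g\<^sub>r\<^sub>d}\<close> has survival function
  \<open>(1 - F\<^sub>s\<^sub>r(x/a\<^sub>2)\<^sup>N\<^sup>r) (1 - F\<^sub>r\<^sub>d(x)\<^sup>N\<^sup>d)\<close>.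
  Expanding both powers by the multinomial theorem writes it as a finite sum of terms
  \<open>c x\<^sup>s e\<^sup>-\<^sup>\<alpha>\<^sup>x\<close>, so the density of \<open>Y\<close> is a finite sum of terms
  \<open>c (\<alpha> x\<^sup>s - s x\<^sup>s\<^sup>-\<^sup>1) e\<^sup>-\<^sup>\<alpha>\<^sup>x\<close>.
  Since \<open>log (1 + \<rho> Y) = log \<rho> + log (1/\<rho> + Y)\<close>, dominated convergence shows that
  \<open>C\<^sub>2(\<rho>) - log\<^sub>2 \<rho> / 2\<close> tends to \<open>\<bbbE>[ln Y] / (2 ln 2)\<close>; integrating \<open>ln x\<close> against each
  term of the density (by parts for \<open>s \<ge> 1\<close>, via \<open>\<Gamma>'(1) = -\<gamma>\<close> for \<open>s = 0\<close>) gives the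
  constant. \<open>C\<^sub>1\<close> stays bounded because the SINR \<open>a\<^sub>1\<rho>X / (a\<^sub>2\<rho>X + 1)\<close> never exceeds
  \<open>a\<^sub>1 / a\<^sub>2\<close>.\<close>

section \<open>Erlang distribution functions on the whole real line\<close>

text \<open>The library's \<^const>\<open>erlang_CDF\<close> is cut off to 0 on the negative axis; continuing its
  branch for \<open>x \<ge> 0\<close> analytically gives a function differentiable everywhere, as the differentiation
  of the survival function below requires.\<close>

definition erlang_cdf_ext :: "nat \<Rightarrow> real \<Rightarrow> real \<Rightarrow> real" where
  "erlang_cdf_ext k l x = 1 - (\<Sum>n\<le>k. (l * x) ^ n * exp (- l * x) / fact n)"

definition erlang_density_ext :: "nat \<Rightarrow> real \<Rightarrow> real \<Rightarrow> real" where
  "erlang_density_ext k l x = l ^ Suc k * x ^ k * exp (- l * x) / fact k"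

lemma has_real_derivative_erlang_cdf_ext:
  "(erlang_cdf_ext k l has_real_derivative erlang_density_ext k l x) (at x)"
proof (induction k)
  case 0
  show ?case unfolding erlang_cdf_ext_def erlang_density_ext_def
    by (auto intro!: derivative_eq_intros)
next
  case (Suc k)
  have eq: "erlang_cdf_ext (Suc k) l =
      (\<lambda>x. erlang_cdf_ext k l x - (l * x) ^ Suc k * exp (- l * x) / fact (Suc k))"
    by (auto simp: erlang_cdf_ext_def fun_eq_iff)
  have "((\<lambda>x. erlang_cdf_ext k l x - (l * x) ^ Suc k * exp (- l * x) / fact (Suc k))
      has_real_derivative erlang_density_ext k l x - (real (Suc k) * (l * x) ^ k * l * exp (- l * x)
        + (l * x) ^ Suc k * (exp (- l * x) * (- l))) / fact (Suc k)) (at x)"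
    by (rule DERIV_diff[OF Suc]) (auto intro!: derivative_eq_intros, cases k, auto simp: algebra_simps)
  also have "erlang_density_ext k l x - (real (Suc k) * (l * x) ^ k * l * exp (- l * x)
        + (l * x) ^ Suc k * (exp (- l * x) * (- l))) / fact (Suc k) = erlang_density_ext (Suc k) l x"
    unfolding erlang_density_ext_def
    by (simp add: field_simps power_mult_distrib del: fact_Suc) (simp add: field_simps)
  finally show ?case unfolding eq .
qed

lemma erlang_cdf_ext_0 [simp]: "erlang_cdf_ext k l 0 = 0"
  unfolding erlang_cdf_ext_def by (simp add: power_0_left sum.atMost_shift del: sum.atMost_Suc)

lemma erlang_CDF_eq_ext: "0 \<le> x \<Longrightarrow> erlang_CDF k l x = erlang_cdf_ext k l x"
  by (simp add: erlang_CDF_def erlang_cdf_ext_def)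

lemma erlang_cdf_ext_nonneg: "0 < l \<Longrightarrow> 0 \<le> x \<Longrightarrow> 0 \<le> erlang_cdf_ext k l x"
  using erlang_CDF_nonneg[of l k x] by (simp add: erlang_CDF_eq_ext)

lemma erlang_cdf_ext_le_1: "0 \<le> l \<Longrightarrow> 0 \<le> x \<Longrightarrow> erlang_cdf_ext k l x \<le> 1"
  unfolding erlang_cdf_ext_def by (auto intro!: sum_nonneg)

lemma erlang_density_ext_nonneg: "0 \<le> l \<Longrightarrow> 0 \<le> x \<Longrightarrow> 0 \<le> erlang_density_ext k l x"
  unfolding erlang_density_ext_def by auto

lemma tendsto_pow_mult_exp_at_top:
  "0 < a \<Longrightarrow> ((\<lambda>x::real. x ^ k * exp (- a * x)) \<longlongrightarrow> 0) at_top"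
proof -
  assume a: "0 < a"
  have "filterlim (\<lambda>x::real. a * x) at_top at_top"
    using a by (intro filterlim_tendsto_pos_mult_at_top[OF tendsto_const] filterlim_ident) auto
  from filterlim_compose[OF tendsto_power_div_exp_0 this]
  have "((\<lambda>x::real. (a * x) ^ k / exp (a * x) / a ^ k) \<longlongrightarrow> 0 / a ^ k) at_top"
    by (intro tendsto_divide tendsto_const) (use a in auto)
  moreover have "(a * x) ^ k / exp (a * x) / a ^ k = x ^ k * exp (- a * x)" for x
    using a by (simp add: power_mult_distrib exp_minus field_simps)
  ultimately show ?thesis by simp
qed

lemma tendsto_erlang_cdf_ext_at_top: "0 < l \<Longrightarrow> (erlang_cdf_ext k l \<longlongrightarrow> 1) at_top"
proof -
  assume l: "0 < l"
  have "((\<lambda>x. 1 - (\<Sum>n\<le>k. (l * x) ^ n * exp (- l * x) / fact n)) \<longlongrightarrow> 1 - (\<Sum>n\<le>k. 0 / fact n)) at_top"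
  proof (intro tendsto_diff tendsto_const tendsto_sum tendsto_divide)
    fix n
    have "((\<lambda>x. l ^ n * (x ^ n * exp (- l * x))) \<longlongrightarrow> l ^ n * 0) at_top"
      by (intro tendsto_mult tendsto_const tendsto_pow_mult_exp_at_top l)
    then show "((\<lambda>x. (l * x) ^ n * exp (- l * x)) \<longlongrightarrow> 0) at_top"
      by (simp add: power_mult_distrib mult.assoc)
  qed auto
  then show ?thesis by (simp add: erlang_cdf_ext_def[abs_def])
qed

lemma gamma_pdf_eq_erlang_density:
  assumes "0 < m" "x \<noteq> 0"
  shows "gamma_pdf m \<Omega> x = erlang_density (m - 1) (real m / \<Omega>) x"
proof (cases "0 < x")
  case True
  have "Gamma (real m) = fact (m - 1)"
    using Gamma_fact[of "m - 1"] assms(1) by (simp add: of_nat_diff)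
  moreover have "(real m / \<Omega>) ^ Suc (m - 1) = (real m / \<Omega>) ^ m" using assms(1) by simp
  ultimately show ?thesis using True unfolding gamma_pdf_def erlang_density_def
    by (simp add: field_simps)
qed (use assms in \<open>simp add: gamma_pdf_def erlang_density_def\<close>)

lemma (in prob_space) distributed_gamma_pdf_erlang:
  assumes "0 < m" "distributed M lborel G (\<lambda>x. ennreal (gamma_pdf m \<Omega> x))"
  shows "distributed M lborel G (erlang_density (m - 1) (real m / \<Omega>))"
proof -
  have "AE x in lborel. ennreal (gamma_pdf m \<Omega> x) = ennreal (erlang_density (m - 1) (real m / \<Omega>) x)"
    using AE_lborel_singleton[of 0] by eventually_elim (simp add: gamma_pdf_eq_erlang_density assms(1))
  moreover have "(\<lambda>x. ennreal (gamma_pdf m \<Omega> x)) \<in> borel_measurable lborel"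
    unfolding gamma_pdf_def by measurable
  ultimately have "distributed M lborel G (\<lambda>x. ennreal (gamma_pdf m \<Omega> x)) \<longleftrightarrow>
      distributed M lborel G (\<lambda>x. ennreal (erlang_density (m - 1) (real m / \<Omega>) x))"
    by (intro distributed_cong_density) simp_all
  with assms(2) show ?thesis by simp
qed

lemma (in prob_space) prob_gamma_le:
  assumes "0 < m" "0 < \<Omega>" "0 \<le> x" "distributed M lborel G (\<lambda>x. ennreal (gamma_pdf m \<Omega> x))"
  shows "prob {\<omega> \<in> space M. G \<omega> \<le> x} = erlang_cdf_ext (m - 1) (real m / \<Omega>) x"
  using erlang_distributed_le[OF distributed_gamma_pdf_erlang[OF assms(1,4)], of x] assms(1-3)
  by (simp add: erlang_CDF_eq_ext)

lemma (in prob_space) AE_gamma_nonneg: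
  assumes "distributed M lborel G (\<lambda>x. ennreal (gamma_pdf m \<Omega> x))"
  shows "AE \<omega> in M. 0 \<le> G \<omega>"
proof -
  have "AE x in lborel. 0 < ennreal (gamma_pdf m \<Omega> x) \<longrightarrow> 0 \<le> x"
    by (rule AE_I2) (auto simp: gamma_pdf_def)
  then show ?thesis
    using distributed_AE2[OF assms, of "\<lambda>x. 0 \<le> x"] by simp
qed

section \<open>Integrals of \<open>x\<^sup>p e\<^sup>-\<^sup>a\<^sup>x\<close> against \<open>ln x\<close>\<close>

lemma integrable_pow_exp:
  assumes "0 < a"
  shows "integrable lborel (\<lambda>x::real. indicator {0..} x * x ^ p * exp (- a * x))"
proof -
  have "(\<integral>\<^sup>+x. ennreal (erlang_density 0 a x * x ^ p) \<partial>lborel) = ennreal (fact p / (fact 0 * a ^ p))"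
    using nn_integral_erlang_ith_moment[OF assms, of 0 p] by simp
  then have "has_bochner_integral lborel (\<lambda>x. erlang_density 0 a x * x ^ p) (fact p / (fact 0 * a ^ p))"
    using assms by (intro has_bochner_integral_nn_integral) (auto simp: erlang_density_def)
  then have "integrable lborel (\<lambda>x. erlang_density 0 a x * x ^ p / a)"
    by (intro integrable_divide integrable.intros)
  moreover have "(\<lambda>x. erlang_density 0 a x * x ^ p / a) = (\<lambda>x. indicator {0..} x * x ^ p * exp (- a * x))"
    using assms by (auto simp: fun_eq_iff erlang_density_def indicator_def)
  ultimately show ?thesis by simp
qed

lemma tendsto_x_ln_x_at_right_0: "((\<lambda>x::real. x * ln x) \<longlongrightarrow> 0) (at_right 0)"
proof (rule Lim_null_comparison)
  have "eventually (\<lambda>x::real. 0 < x \<and> x < 1) (at_right 0)"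
    by (auto simp: eventually_at_right_field intro!: exI[of _ 1])
  then show "\<forall>\<^sub>F x in at_right 0. norm (x * ln x) \<le> 2 * sqrt x"
  proof (rule eventually_mono)
    fix x :: real assume x: "0 < x \<and> x < 1"
    have "ln (1 / sqrt x) \<le> 1 / sqrt x - 1" using x by (intro ln_le_minus_one) auto
    moreover have "ln (1 / sqrt x) = - ln x / 2" using x by (simp add: ln_div ln_sqrt)
    ultimately have "- ln x \<le> 2 / sqrt x" by (simp add: field_simps)
    then have "x * (- ln x) \<le> x * (2 / sqrt x)" using x by (intro mult_left_mono) auto
    moreover have "norm (x * ln x) = x * (- ln x)" using x by (simp add: abs_mult)
    moreover have "x * (2 / sqrt x) = 2 * sqrt x" using x by (simp add: field_simps)
    ultimately show "norm (x * ln x) \<le> 2 * sqrt x" by simp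
  qed
  show "((\<lambda>x. 2 * sqrt x) \<longlongrightarrow> 0) (at_right (0::real))"
    by (auto intro!: tendsto_eq_intros)
qed

lemma set_integrable_neg_ln_01: "set_integrable lborel {0<..<1} (\<lambda>x::real. - ln x)"
proof -
  have "set_integrable lborel (einterval 0 1) (\<lambda>x::real. - ln x)"
  proof (rule interval_integral_FTC_nonneg[where F="\<lambda>x. x - x * ln x" and A=0 and B=1])
    show "((\<lambda>x. x - x * ln x) has_real_derivative - ln x) (at x)" if "0 < ereal x" for x
      using that by (auto intro!: derivative_eq_intros)
    show "isCont (\<lambda>x. - ln x) x" if "0 < ereal x" for x
      using that by (auto intro!: continuous_intros)
    have "((\<lambda>x. x - x * ln x) \<longlongrightarrow> 0 - 0) (at_right (0::real))"
      by (intro tendsto_diff tendsto_x_ln_x_at_right_0) (auto intro: tendsto_ident_at)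
    then show "(((\<lambda>x. x - x * ln x) \<circ> real_of_ereal) \<longlongrightarrow> 0) (at_right 0)"
      unfolding zero_ereal_def ereal_tendsto_simps by simp
    show "(((\<lambda>x. x - x * ln x) \<circ> real_of_ereal) \<longlongrightarrow> 1) (at_left 1)"
      by (auto simp: one_ereal_def ereal_tendsto_simps intro!: tendsto_eq_intros)
  qed auto
  moreover have "einterval 0 1 = {0<..<(1::real)}"
    by (auto simp: einterval_def zero_ereal_def one_ereal_def)
  ultimately show ?thesis by simp
qed

lemma abs_pow_exp_ln_le:
  fixes x a :: real
  assumes "0 < a"
  shows "\<bar>indicator {0..} x * x ^ p * exp (- a * x) * ln x\<bar>
     \<le> indicator {0<..<1} x * (- ln x) + indicator {0..} x * x ^ Suc p * exp (- a * x)"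
proof -
  consider "x \<le> 0" | "0 < x" "x < 1" | "1 \<le> x" by linarith
  then show ?thesis
  proof cases
    case 1
    then show ?thesis by (cases "x = 0") (auto simp: indicator_def)
  next
    case 2
    have "\<bar>indicator {0..} x * x ^ p * exp (- a * x) * ln x\<bar> = x ^ p * exp (- a * x) * (- ln x)"
      using 2 by (simp add: abs_mult indicator_def)
    also have "\<dots> \<le> 1 * 1 * (- ln x)"
      using 2 assms by (intro mult_right_mono mult_mono power_le_one) auto
    also have "\<dots> \<le> indicator {0<..<1} x * (- ln x) + indicator {0..} x * x ^ Suc p * exp (- a * x)"
      using 2 by (simp add: indicator_def)
    finally show ?thesis .
  next
    case 3
    have "ln x \<le> x" using ln_le_minus_one[of x] 3 by linarith
    then have "x ^ p * exp (- a * x) * ln x \<le> x ^ p * exp (- a * x) * x"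
      using 3 by (intro mult_left_mono) auto
    then show ?thesis using 3 by (simp add: abs_mult indicator_def mult_ac)
  qed
qed

lemma integrable_pow_exp_ln:
  assumes "0 < a"
  shows "integrable lborel (\<lambda>x::real. indicator {0..} x * x ^ p * exp (- a * x) * ln x)"
proof (rule Bochner_Integration.integrable_bound)
  show "integrable lborel
      (\<lambda>x::real. indicator {0<..<1} x * (- ln x) + indicator {0..} x * x ^ Suc p * exp (- a * x))"
    using set_integrable_neg_ln_01 integrable_pow_exp[OF assms, of "Suc p"]
    by (auto simp: set_integrable_def)
  show "AE x in lborel. norm (indicator {0..} x * x ^ p * exp (- a * x) * ln x)
      \<le> norm (indicator {0<..<1} x * (- ln x) + indicator {0..} x * x ^ Suc p * exp (- a * x))"
    using abs_pow_exp_ln_le[OF assms] by (auto intro!: AE_I2 order_trans[OF _ abs_ge_self])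
qed measurable

lemma has_bochner_integral_Gamma:
  assumes "0 < y"
  shows "has_bochner_integral lborel (\<lambda>t::real. indicator {0..} t * t powr (y - 1) / exp t) (Gamma y)"
proof (rule has_bochner_integral_nn_integral)
  show "(\<integral>\<^sup>+ x. ennreal (indicator {0..} x * x powr (y - 1) / exp x) \<partial>lborel) = ennreal (Gamma y)"
    using Gamma_conv_nn_integral_real[OF assms] by simp
qed (use assms in \<open>auto simp: Gamma_real_pos less_imp_le\<close>)

lemma abs_powr_diff_quotient_le:
  fixes t h :: real
  assumes h: "0 < h" "h \<le> 1" and t: "0 < t"
  shows "\<bar>(t powr h - 1) / exp t / h\<bar> \<le> indicator {0<..<1} t * (- ln t) + t\<^sup>2 * exp (- t)"
proof (cases "t < 1")
  case True
  have "\<bar>t powr h - 1\<bar> = 1 - exp (h * ln t)"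
    using True t h by (simp add: powr_def mult_nonneg_nonpos)
  also have "\<dots> \<le> - (h * ln t)" using exp_ge_add_one_self[of "h * ln t"] by linarith
  finally have "\<bar>t powr h - 1\<bar> / h \<le> - ln t"
    using h by (simp add: divide_le_eq mult.commute)
  moreover have "\<bar>(t powr h - 1) / exp t / h\<bar> \<le> \<bar>t powr h - 1\<bar> / h"
    using h t by (simp add: abs_div divide_le_eq field_simps mult_le_cancel_right1)
  moreover have "0 \<le> t\<^sup>2 * exp (- t)" by simp
  moreover have "indicator {0<..<1} t = (1::real)" using True t by simp
  ultimately show ?thesis by (simp only: mult_1_left)
next
  case False
  have y: "0 \<le> h * ln t" using False h by simp
  have "exp (h * ln t) - 1 \<le> h * ln t * exp (h * ln t)"
    using exp_ge_add_one_self[of "- (h * ln t)"] y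
    by (simp add: exp_minus field_simps)
  also have "\<dots> \<le> h * t * t"
  proof -
    have "exp (h * ln t) = t powr h" using t by (simp add: powr_def)
    also have "\<dots> \<le> t powr 1" using False h by (intro powr_mono) auto
    finally have "exp (h * ln t) \<le> t" using t by simp
    moreover have "ln t \<le> t" using ln_le_minus_one[of t] t by linarith
    ultimately show ?thesis using h y False by (simp add: mult.assoc mult_mono)
  qed
  finally have "\<bar>t powr h - 1\<bar> \<le> h * (t * t)"
    using t y by (simp add: powr_def mult.assoc)
  then have "\<bar>t powr h - 1\<bar> / h / exp t \<le> t * t / exp t"
    using h by (intro divide_right_mono) (simp_all add: divide_le_eq mult.commute)
  moreover have "t * t / exp t = t\<^sup>2 * exp (- t)"
    by (simp add: exp_minus field_simps power2_eq_square)
  ultimately show ?thesis using False h by (simp add: indicator_def abs_div abs_mult mult.commute)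
qed

lemma tendsto_Gamma_diff_quotient_integral:
  fixes h :: "nat \<Rightarrow> real"
  assumes h: "\<And>n. 0 < h n" "\<And>n. h n \<le> 1" and h_at_0: "filterlim h (at 0) sequentially"
  shows "(\<lambda>n. (Gamma (1 + h n) - Gamma 1) / h n) \<longlonglongrightarrow> (\<integral>t. indicator {0..} t * exp (- t) * ln (t::real) \<partial>lborel)"
proof -
  define s where
    "s n t = (indicator {0..} t * t powr (1 + h n - 1) / exp t - indicator {0..} t * t powr (1 - 1) / exp t) / h n"
    for n and t :: real
  have "integral\<^sup>L lborel (s n) = (Gamma (1 + h n) - Gamma 1) / h n" for n
    unfolding s_def using h[of n]
    by (intro has_bochner_integral_integral_eq has_bochner_integral_divide_zero
        has_bochner_integral_diff has_bochner_integral_Gamma) auto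
  moreover have "(\<lambda>n. integral\<^sup>L lborel (s n)) \<longlonglongrightarrow> (\<integral>t. indicator {0..} t * exp (- t) * ln t \<partial>lborel)"
  proof (rule integral_dominated_convergence
      [where w="\<lambda>t. indicator {0<..<1} t * (- ln t) + indicator {0..} t * t\<^sup>2 * exp (- t)"])
    show "integrable lborel (\<lambda>t::real. indicator {0<..<1} t * (- ln t) + indicator {0..} t * t\<^sup>2 * exp (- t))"
      using set_integrable_neg_ln_01 integrable_pow_exp[of 1 2] by (auto simp: set_integrable_def)
    show "AE t in lborel. norm (s n t) \<le> indicator {0<..<1} t * (- ln t) + indicator {0..} t * t\<^sup>2 * exp (- t)"
      for n
      using AE_lborel_singleton[of 0]
    proof eventually_elim
      case (elim t)
      show ?case
      proof (cases "0 < t")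
        case True
        then have "s n t = (t powr h n - 1) / exp t / h n" by (simp add: s_def diff_divide_distrib)
        with abs_powr_diff_quotient_le[OF h True] True show ?thesis by simp
      qed (use elim in \<open>simp add: s_def\<close>)
    qed
    show "AE t in lborel. (\<lambda>n. s n t) \<longlonglongrightarrow> indicator {0..} t * exp (- t) * ln t"
    proof (rule AE_I2)
      fix t :: real
      show "(\<lambda>n. s n t) \<longlonglongrightarrow> indicator {0..} t * exp (- t) * ln t"
      proof (cases "0 < t")
        case True
        have "((\<lambda>y. exp (y * ln t)) has_field_derivative exp (0 * ln t) * ln t) (at 0)"
          by (auto intro!: derivative_eq_intros)
        then have "((\<lambda>y. (exp (y * ln t) - exp (0 * ln t)) / (y - 0)) \<longlongrightarrow> ln t) (at 0)"
          unfolding has_field_derivative_iff by simp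
        from tendsto_mult[OF tendsto_const filterlim_compose[OF this h_at_0], of "exp (- t)"]
        show ?thesis using True by (simp add: s_def powr_def exp_minus field_simps)
      qed (cases "t = 0", auto simp: s_def)
    qed
  qed (simp_all add: s_def[abs_def])
  ultimately show ?thesis by simp
qed

text \<open>Both sides are \<open>\<Gamma>'(1)\<close>.\<close>

lemma integral_exp_ln:
  shows "integrable lborel (\<lambda>t::real. indicator {0..} t * exp (- t) * ln t)"
    and "(\<integral>t. indicator {0..} t * exp (- t) * ln (t::real) \<partial>lborel) = - euler_mascheroni"
proof -
  show "integrable lborel (\<lambda>t::real. indicator {0..} t * exp (- t) * ln t)"
    using integrable_pow_exp_ln[of 1 0] by simp
  define h where "h n = inverse (real (Suc n))" for n
  have h: "0 < h n" "h n \<le> 1" for n by (auto simp: h_def inverse_le_1_iff)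
  have h_at_0: "filterlim h (at 0) sequentially"
    unfolding h_def by (rule filterlim_atI[OF LIMSEQ_inverse_real_of_nat]) auto
  have "(Gamma has_field_derivative Gamma 1 * Digamma 1) (at (1::real))"
    by (rule has_field_derivative_Gamma) auto
  then have "((\<lambda>y. (Gamma (1 + y) - Gamma 1) / y) \<longlongrightarrow> - euler_mascheroni) (at (0::real))"
    by (simp add: DERIV_def)
  from tendsto_Gamma_diff_quotient_integral[OF h h_at_0] filterlim_compose[OF this h_at_0]
  show "(\<integral>t. indicator {0..} t * exp (- t) * ln (t::real) \<partial>lborel) = - euler_mascheroni"
    by (rule LIMSEQ_unique)
qed

lemma tendsto_ln_mult_pow_exp_at_top:
  fixes a :: real
  assumes "0 < a"
  shows "((\<lambda>x::real. ln x * (x ^ s * exp (- a * x))) \<longlongrightarrow> 0) at_top"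
proof (rule Lim_null_comparison)
  show "\<forall>\<^sub>F x in at_top. norm (ln x * (x ^ s * exp (- a * x))) \<le> x ^ Suc s * exp (- a * x)"
    using eventually_ge_at_top[of "1::real"]
  proof eventually_elim
    case (elim x)
    then have "0 \<le> ln x" "ln x \<le> x" using ln_le_minus_one[of x] by auto
    then show ?case using elim by (simp add: abs_mult mult_right_mono)
  qed
qed (rule tendsto_pow_mult_exp_at_top[OF assms])

lemma tendsto_ln_mult_pow_exp_at_right_0:
  "((\<lambda>x::real. ln x * (x ^ Suc s * exp (- a * x))) \<longlongrightarrow> 0) (at_right 0)"
proof -
  have "((\<lambda>x::real. (x * ln x) * (x ^ s * exp (- a * x))) \<longlongrightarrow> 0 * (0 ^ s * exp (- a * 0))) (at_right 0)"
    by (intro tendsto_mult tendsto_x_ln_x_at_right_0 tendsto_power tendsto_exp tendsto_minus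
        tendsto_const tendsto_ident_at)
  then show ?thesis by (simp add: algebra_simps)
qed

text \<open>The integrand is \<open>-(x\<^sup>s e\<^sup>-\<^sup>a\<^sup>x)' ln x\<close>; integrating by parts leaves
  \<open>\<integral> x\<^sup>s\<^sup>-\<^sup>1 e\<^sup>-\<^sup>a\<^sup>x dx\<close>, whose primitive is an Erlang distribution function.\<close>

lemma has_real_derivative_ln_pow_exp_primitive:
  fixes a x :: real
  assumes a: "0 < a" and x: "0 < x"
  shows "((\<lambda>x. - (ln x * (x ^ Suc r * exp (- a * x))) + fact r / a ^ Suc r * erlang_cdf_ext r a x)
    has_real_derivative ln x * ((a * x ^ Suc r - real (Suc r) * x ^ r) * exp (- a * x))) (at x)"
proof -
  have "((\<lambda>x. - (ln x * (x ^ Suc r * exp (- a * x))) + fact r / a ^ Suc r * erlang_cdf_ext r a x)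
      has_real_derivative - (1 / x * (x ^ Suc r * exp (- a * x)) + ln x * (real (Suc r) * x ^ r * exp (- a * x)
        + x ^ Suc r * (exp (- a * x) * (- a)))) + fact r / a ^ Suc r * erlang_density_ext r a x) (at x)"
    using x by (intro derivative_eq_intros has_real_derivative_erlang_cdf_ext refl)
      (auto intro: has_real_derivative_erlang_cdf_ext)
  moreover have "- (1 / x * (x ^ Suc r * exp (- a * x)) + ln x * (real (Suc r) * x ^ r * exp (- a * x)
      + x ^ Suc r * (exp (- a * x) * (- a)))) + fact r / a ^ Suc r * erlang_density_ext r a x
      = ln x * ((a * x ^ Suc r - real (Suc r) * x ^ r) * exp (- a * x))"
    using x a unfolding erlang_density_ext_def by (simp add: field_simps power_Suc)
  ultimately show ?thesis by simp
qed

lemma integral_ln_diff_pow_exp_pos: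
  fixes a :: real
  assumes a: "0 < a" and s: "1 \<le> s"
  shows "(\<integral>x. indicator {0..} x * ln x * ((a * x ^ s - real s * x ^ (s - 1)) * exp (- a * x)) \<partial>lborel)
    = fact (s - 1) / a ^ s"
proof -
  obtain r where r: "s = Suc r" using s by (cases s) auto
  define f where "f x = ln x * ((a * x ^ s - real s * x ^ (s - 1)) * exp (- a * x))" for x :: real
  define F where "F x = - (ln x * (x ^ s * exp (- a * x))) + fact r / a ^ s * erlang_cdf_ext r a x"
    for x :: real
  have "integrable lborel (\<lambda>x. a * (indicator {0..} x * x ^ s * exp (- a * x) * ln x)
      - real s * (indicator {0..} x * x ^ (s - 1) * exp (- a * x) * ln x))"
    using integrable_pow_exp_ln[OF a] by simp
  then have "set_integrable lborel {0<..} f"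
    unfolding set_integrable_def
    by (rule integrable_cong_AE_imp) (auto simp: f_def indicator_def algebra_simps)
  moreover have "einterval 0 \<infinity> = {0::real<..}" by (auto simp: einterval_def zero_ereal_def)
  ultimately have "(LBINT x=0..\<infinity>. f x) = fact r / a ^ s - 0"
  proof (intro interval_integral_FTC_integrable[where F=F])
    show "(F has_vector_derivative f x) (at x)" if "0 < ereal x" for x
      using has_real_derivative_ln_pow_exp_primitive[OF a, of x r] that
      unfolding F_def[abs_def] f_def r by (simp add: has_real_derivative_iff_has_vector_derivative)
    show "isCont f x" if "0 < ereal x" for x
      using that unfolding f_def by (auto intro!: continuous_intros)
    have "isCont (erlang_cdf_ext r a) 0"
      by (rule DERIV_isCont[OF has_real_derivative_erlang_cdf_ext])
    then have "((\<lambda>x. - (ln x * (x ^ Suc r * exp (- a * x))) + fact r / a ^ s * erlang_cdf_ext r a x)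
        \<longlongrightarrow> - 0 + fact r / a ^ s * erlang_cdf_ext r a 0) (at_right 0)"
      by (intro tendsto_add tendsto_minus tendsto_ln_mult_pow_exp_at_right_0 tendsto_mult tendsto_const)
        (auto simp: isCont_def intro: tendsto_mono[OF at_within_le_at])
    then show "((F \<circ> real_of_ereal) \<longlongrightarrow> 0) (at_right 0)"
      unfolding zero_ereal_def ereal_tendsto_simps by (simp add: F_def[abs_def] r)
    have "((\<lambda>x. - (ln x * (x ^ s * exp (- a * x))) + fact r / a ^ s * erlang_cdf_ext r a x)
        \<longlongrightarrow> - 0 + fact r / a ^ s * 1) at_top"
      by (intro tendsto_add tendsto_minus tendsto_ln_mult_pow_exp_at_top tendsto_mult tendsto_const
          tendsto_erlang_cdf_ext_at_top a)
    then show "((F \<circ> real_of_ereal) \<longlongrightarrow> fact r / a ^ s) (at_left \<infinity>)"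
      unfolding ereal_tendsto_simps by (simp add: F_def[abs_def])
  qed auto
  moreover have "(LBINT x=0..\<infinity>. f x)
      = (\<integral>x. indicator {0..} x * ln x * ((a * x ^ s - real s * x ^ (s - 1)) * exp (- a * x)) \<partial>lborel)"
    unfolding zero_ereal_def interval_integral_to_infinity_eq set_lebesgue_integral_def
    by (intro Bochner_Integration.integral_cong) (auto simp: f_def indicator_def)
  ultimately show ?thesis by (simp add: r)
qed

lemma integral_ln_exp:
  fixes a :: real
  assumes a: "0 < a"
  shows "(\<integral>x. indicator {0..} x * ln x * (a * exp (- a * x)) \<partial>lborel) = - euler_mascheroni - ln a"
proof -
  let ?f = "\<lambda>x::real. indicator {0..} x * ln x * (a * exp (- a * x))"
  have "has_bochner_integral lborel (\<lambda>x. erlang_density 0 1 x * x ^ 0) 1"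
    using nn_integral_erlang_ith_moment[of 1 0 0]
    by (intro has_bochner_integral_nn_integral) (auto simp: erlang_density_def)
  moreover have "(\<lambda>x. erlang_density 0 1 x * x ^ 0) = (\<lambda>x::real. indicator {0..} x * exp (- x))"
    by (auto simp: fun_eq_iff erlang_density_def indicator_def)
  ultimately have exp_integral: "has_bochner_integral lborel (\<lambda>x::real. indicator {0..} x * exp (- x)) 1"
    by simp
  have "integral\<^sup>L lborel ?f = \<bar>1 / a\<bar> *\<^sub>R (\<integral>x. ?f (0 + (1 / a) * x) \<partial>lborel)"
    using a by (intro lborel_integral_real_affine) auto
  also have "(\<integral>x. ?f (0 + (1 / a) * x) \<partial>lborel)
      = (\<integral>x. a * (indicator {0..} x * exp (- x) * ln x) - a * ln a * (indicator {0..} x * exp (- x)) \<partial>lborel)"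
  proof (rule Bochner_Integration.integral_cong_AE)
    show "AE x in lborel. ?f (0 + (1 / a) * x)
        = a * (indicator {0..} x * exp (- x) * ln x) - a * ln a * (indicator {0..} x * exp (- x))"
      using AE_lborel_singleton[of 0]
    proof eventually_elim
      case (elim x)
      then consider "0 < x" | "x < 0" by linarith
      then show ?case
        by cases (use a in \<open>simp_all add: indicator_def ln_div field_simps zero_le_divide_iff\<close>)
    qed
  qed measurable
  also have "\<dots> = a * (- euler_mascheroni) - a * ln a * 1"
    using integral_exp_ln exp_integral
    by (subst Bochner_Integration.integral_diff)
      (auto simp: integrable.intros has_bochner_integral_integral_eq)
  also have "\<bar>1 / a\<bar> *\<^sub>R (a * (- euler_mascheroni) - a * ln a * 1) = - euler_mascheroni - ln a"
    using a by (simp add: field_simps)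
  finally show ?thesis .
qed

lemma integral_ln_diff_pow_exp:
  fixes a :: real
  assumes a: "0 < a"
  shows "(\<integral>x. indicator {0..} x * ln x * ((a * x ^ s - real s * x ^ (s - 1)) * exp (- a * x)) \<partial>lborel)
    = 1 / a ^ s * (Gamma (real s + 1) * (Digamma (real s + 1) - ln a)
          - (if s = 0 then 0 else real s * Gamma (real s) * (Digamma (real s) - ln a)))"
proof (cases "s = 0")
  case True
  then show ?thesis using integral_ln_exp[OF a] by simp
next
  case False
  have Gamma_Suc: "Gamma (real s + 1) = real s * Gamma (real s)"
    using False by (subst Gamma_plus1) (auto simp: nonpos_Ints_def)
  have Digamma_Suc: "Digamma (real s + 1) = Digamma (real s) + 1 / real s"
    using False by (subst Digamma_plus1) auto
  have Gamma_s: "Gamma (real s) = fact (s - 1)"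
    using Gamma_fact[of "s - 1"] False by (simp add: of_nat_diff)
  have "Gamma (real s + 1) * (Digamma (real s + 1) - ln a)
      - real s * Gamma (real s) * (Digamma (real s) - ln a) = fact (s - 1)"
    unfolding Gamma_Suc Digamma_Suc Gamma_s using False by (simp add: field_simps)
  then show ?thesis
    using integral_ln_diff_pow_exp_pos[OF a, of s] False by simp
qed

lemma integral_sum_sum_mult:
  fixes f :: "'i \<Rightarrow> 'j \<Rightarrow> 'a \<Rightarrow> real"
  assumes "finite A" "finite B" "\<And>k q. k \<in> A \<Longrightarrow> q \<in> B \<Longrightarrow> integrable M (f k q)"
  shows "(\<integral>x. (\<Sum>k\<in>A. \<Sum>q\<in>B. c k q * f k q x) \<partial>M) = (\<Sum>k\<in>A. \<Sum>q\<in>B. c k q * (\<integral>x. f k q x \<partial>M))"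
  using assms by (simp add: Bochner_Integration.integral_sum Bochner_Integration.integrable_sum)

lemma integrable_diff_pow_exp_mult:
  fixes a :: real
  assumes "\<And>p. integrable lborel (\<lambda>x. indicator {0..} x * x ^ p * exp (- a * x) * g x)"
  shows "integrable lborel
    (\<lambda>x. indicator {0..} x * ((a * x ^ s - real s * x ^ (s - 1)) * exp (- a * x)) * g x)"
proof -
  have "(\<lambda>x. indicator {0..} x * ((a * x ^ s - real s * x ^ (s - 1)) * exp (- a * x)) * g x)
      = (\<lambda>x. a * (indicator {0..} x * x ^ s * exp (- a * x) * g x)
        - real s * (indicator {0..} x * x ^ (s - 1) * exp (- a * x) * g x))"
    by (simp add: fun_eq_iff algebra_simps)
  then show ?thesis using assms by simp
qed

section \<open>The multinomial theorem\<close>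

definition multiindices :: "nat \<Rightarrow> nat \<Rightarrow> (nat \<Rightarrow> nat) set" where
  "multiindices N m = {k. (\<forall>i>m. k i = 0) \<and> (\<Sum>i\<le>m. k i) = N}"

lemma finite_multiindices: "finite (multiindices N m)"
proof -
  have "multiindices N m \<subseteq> (\<lambda>f i. if i \<le> m then f i else 0) ` ({..m} \<rightarrow>\<^sub>E {..N})"
  proof
    fix k assume k: "k \<in> multiindices N m"
    have "k i \<le> N" if "i \<le> m" for i
      using k member_le_sum[of i "{..m}" k] that by (simp add: multiindices_def)
    then have "restrict k {..m} \<in> {..m} \<rightarrow>\<^sub>E {..N}" by auto
    moreover have "k = (\<lambda>i. if i \<le> m then restrict k {..m} i else 0)"
      using k by (auto simp: multiindices_def fun_eq_iff)
    ultimately show "k \<in> (\<lambda>f i. if i \<le> m then f i else 0) ` ({..m} \<rightarrow>\<^sub>E {..N})"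
      by (intro image_eqI)
  qed
  then show ?thesis by (rule finite_subset) (intro finite_imageI finite_PiE; simp)
qed

lemma multiindices_0: "multiindices N 0 = {\<lambda>i. if i = 0 then N else 0}"
  by (auto simp: multiindices_def fun_eq_iff)

lemma bij_betw_multiindices_Suc:
  "bij_betw (\<lambda>k. (k (Suc m), k(Suc m := 0)))
     (multiindices N (Suc m)) (SIGMA j:{..N}. multiindices (N - j) m)"
proof (rule bij_betw_byWitness[where f'="\<lambda>(j, k). k(Suc m := j)"])
  have sum_upd: "(\<Sum>i\<le>m. (k(Suc m := j)) i) = (\<Sum>i\<le>m. k i)" for k :: "nat \<Rightarrow> nat" and j
    by (intro sum.cong) auto
  show "(\<lambda>k. (k (Suc m), k(Suc m := 0))) ` multiindices N (Suc m) \<subseteq> (SIGMA j:{..N}. multiindices (N - j) m)"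
    using sum_upd by (auto simp: multiindices_def)
  show "(\<lambda>(j, k). k(Suc m := j)) ` (SIGMA j:{..N}. multiindices (N - j) m) \<subseteq> multiindices N (Suc m)"
    using sum_upd by (auto simp: multiindices_def)
qed (auto simp: multiindices_def fun_eq_iff)

lemma power_sum_multinomial:
  fixes x :: "nat \<Rightarrow> real"
  shows "(\<Sum>i\<le>m. x i) ^ N = (\<Sum>k\<in>multiindices N m. multinom N m k * (\<Prod>i\<le>m. x i ^ k i))"
proof (induction m arbitrary: N)
  case 0
  show ?case by (simp add: multiindices_0 multinom_def)
next
  case (Suc m)
  let ?t = "\<lambda>j k. of_nat (N choose j) * x (Suc m) ^ j * (multinom (N - j) m k * (\<Prod>i\<le>m. x i ^ k i))"
  have "(\<Sum>i\<le>Suc m. x i) ^ N = (x (Suc m) + (\<Sum>i\<le>m. x i)) ^ N" by (simp add: add.commute)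
  also have "\<dots> = (\<Sum>j\<le>N. of_nat (N choose j) * x (Suc m) ^ j * (\<Sum>i\<le>m. x i) ^ (N - j))"
    by (rule binomial_ring)
  also have "\<dots> = (\<Sum>j\<le>N. \<Sum>k\<in>multiindices (N - j) m. ?t j k)"
    by (simp add: Suc sum_distrib_left)
  also have "\<dots> = (\<Sum>(j, k)\<in>(SIGMA j:{..N}. multiindices (N - j) m). ?t j k)"
    by (rule sum.Sigma) (auto simp: finite_multiindices)
  also have "\<dots> = (\<Sum>k\<in>multiindices N (Suc m). (\<lambda>(j, k). ?t j k) (k (Suc m), k(Suc m := 0)))"
    by (rule sum.reindex_bij_betw[OF bij_betw_multiindices_Suc, symmetric])
  also have "\<dots> = (\<Sum>k\<in>multiindices N (Suc m). multinom N (Suc m) k * (\<Prod>i\<le>Suc m. x i ^ k i))"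
  proof (rule sum.cong[OF refl])
    fix k assume k: "k \<in> multiindices N (Suc m)"
    then have "k (Suc m) \<le> N" by (simp add: multiindices_def)
    moreover have "(\<Prod>i\<le>m. x i ^ (k(Suc m := 0)) i) = (\<Prod>i\<le>m. x i ^ k i)"
      "(\<Prod>i\<le>m. fact ((k(Suc m := 0)) i) :: real) = (\<Prod>i\<le>m. fact (k i))"
      by (intro prod.cong; simp)+
    moreover have "(\<Prod>i\<le>m. fact (k i) :: real) \<noteq> 0" by (simp add: prod_zero_iff)
    ultimately show "(\<lambda>(j, k). ?t j k) (k (Suc m), k(Suc m := 0)) = multinom N (Suc m) k * (\<Prod>i\<le>Suc m. x i ^ k i)"
      unfolding multinom_def by (simp add: binomial_fact field_simps)
  qed
  finally show ?case .
qed

lemma tuples_eq_multiindices: "tuples N m = multiindices N m - {\<lambda>i. if i = 0 then N else 0}"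
proof -
  have "k = (\<lambda>i. if i = 0 then N else 0)" if k: "k \<in> multiindices N m" "k 0 = N" for k
  proof
    fix i
    have "(\<Sum>i\<le>m. k i) = k 0 + (\<Sum>i\<in>{..m} - {0}. k i)" by (subst sum.remove[of _ 0]) auto
    then have "\<forall>i\<in>{..m} - {0}. k i = 0" using k by (simp add: multiindices_def)
    then show "k i = (if i = 0 then N else 0)"
      using k by (cases "i \<le> m") (auto simp: multiindices_def)
  qed
  then have "k \<in> multiindices N m \<Longrightarrow> k 0 \<noteq> N \<longleftrightarrow> k \<noteq> (\<lambda>i. if i = 0 then N else 0)" for k
    by auto
  moreover have "k \<in> tuples N m \<longleftrightarrow> k \<in> multiindices N m \<and> k 0 \<noteq> N" for k
    by (simp add: tuples_def multiindices_def)
  ultimately show ?thesis by blast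
qed

lemma finite_tuples: "finite (tuples N m)"
  by (simp add: tuples_eq_multiindices finite_multiindices)

lemma tuples_0_less: "k \<in> tuples N m \<Longrightarrow> k 0 < N"
  using member_le_sum[of 0 "{..m}" k] by (fastforce simp: tuples_def)

definition erlang_cdf_term :: "real \<Rightarrow> real \<Rightarrow> nat \<Rightarrow> real" where
  "erlang_cdf_term b x i = (if i = 0 then 1 else - ((b * x) ^ (i - 1) * exp (- b * x) / fact (i - 1)))"

lemma erlang_cdf_ext_eq_sum_term: "erlang_cdf_ext n b x = (\<Sum>i\<le>Suc n. erlang_cdf_term b x i)"
  unfolding erlang_cdf_ext_def
  by (subst sum.atMost_Suc_shift) (simp add: erlang_cdf_term_def sum_negf)

lemma prod_erlang_cdf_term_power:
  assumes k: "k \<in> multiindices N (Suc n)"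
  shows "(\<Prod>i\<le>Suc n. erlang_cdf_term b x i ^ k i) = (-1) ^ (N - k 0)
    * (\<Prod>\<mu><Suc n. (1 / fact \<mu>) ^ k (\<mu> + 1)) * (b * x) ^ wsum (Suc n) k * exp (- real (N - k 0) * b * x)"
proof -
  have sum_k: "(\<Sum>i\<le>n. k (Suc i)) = N - k 0"
    using k unfolding multiindices_def by (subst (asm) sum.atMost_Suc_shift) auto
  have "(\<Prod>i\<le>Suc n. erlang_cdf_term b x i ^ k i) = (\<Prod>i\<le>n. erlang_cdf_term b x (Suc i) ^ k (Suc i))"
    by (subst prod.atMost_Suc_shift) (simp add: erlang_cdf_term_def)
  also have "\<dots> = (\<Prod>i\<le>n. (-1) ^ k (Suc i) * (1 / fact i) ^ k (Suc i) * (b * x) ^ (i * k (Suc i))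
      * exp (- b * x) ^ k (Suc i))"
  proof (intro prod.cong refl)
    fix i
    have "erlang_cdf_term b x (Suc i) = (-1) * ((1 / fact i) * (b * x) ^ i * exp (- b * x))"
      by (simp add: erlang_cdf_term_def)
    then show "erlang_cdf_term b x (Suc i) ^ k (Suc i) = (-1) ^ k (Suc i) * (1 / fact i) ^ k (Suc i)
        * (b * x) ^ (i * k (Suc i)) * exp (- b * x) ^ k (Suc i)"
      by (simp only: power_mult_distrib power_mult mult.assoc)
  qed
  also have "\<dots> = (-1) ^ (N - k 0) * (\<Prod>\<mu><Suc n. (1 / fact \<mu>) ^ k (\<mu> + 1))
      * (b * x) ^ wsum (Suc n) k * exp (- b * x) ^ (N - k 0)"
    by (simp add: prod.distrib power_sum[symmetric] sum_k wsum_def lessThan_Suc_atMost mult.commute)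
  also have "exp (- b * x) ^ (N - k 0) = exp (- real (N - k 0) * b * x)"
    by (subst exp_of_nat_mult[symmetric]) (simp add: mult_ac)
  finally show ?thesis .
qed

lemma one_minus_erlang_cdf_ext_power:
  assumes "0 < m"
  shows "1 - erlang_cdf_ext (m - 1) b x ^ N = - (\<Sum>k\<in>tuples N m. multinom N m k * ((-1) ^ (N - k 0)
    * (\<Prod>\<mu><m. (1 / fact \<mu>) ^ k (\<mu> + 1)) * (b * x) ^ wsum m k * exp (- real (N - k 0) * b * x)))"
proof -
  obtain n where m: "m = Suc n" using assms by (cases m) auto
  let ?e = "\<lambda>i::nat. if i = 0 then N else 0"
  let ?t = "\<lambda>k. multinom N m k * (\<Prod>i\<le>m. erlang_cdf_term b x i ^ k i)"
  have "erlang_cdf_ext n b x ^ N = (\<Sum>k\<in>multiindices N m. ?t k)"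
    unfolding erlang_cdf_ext_eq_sum_term m by (rule power_sum_multinomial)
  also have "\<dots> = ?t ?e + (\<Sum>k\<in>tuples N m. ?t k)"
    unfolding tuples_eq_multiindices
    by (rule sum.remove[OF finite_multiindices]) (simp add: multiindices_def)
  also have "?t ?e = 1"
  proof -
    have "(\<Prod>i\<le>m. erlang_cdf_term b x i ^ ?e i) = 1"
      by (intro prod.neutral) (auto simp: erlang_cdf_term_def)
    moreover have "(\<Prod>i\<le>m. fact (?e i) :: real) = fact N"
      by (subst prod.remove[of _ 0]) (auto intro!: prod.neutral)
    ultimately show ?thesis by (simp add: multinom_def)
  qed
  also have "(\<Sum>k\<in>tuples N m. ?t k) = (\<Sum>k\<in>tuples N m. multinom N m k * ((-1) ^ (N - k 0)
      * (\<Prod>\<mu><m. (1 / fact \<mu>) ^ k (\<mu> + 1)) * (b * x) ^ wsum m k * exp (- real (N - k 0) * b * x)))"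
  proof (intro sum.cong refl)
    fix k assume "k \<in> tuples N m"
    then have "k \<in> multiindices N (Suc n)" by (simp add: tuples_eq_multiindices m)
    from prod_erlang_cdf_term_power[OF this, of b x]
    show "?t k = multinom N m k * ((-1) ^ (N - k 0) * (\<Prod>\<mu><m. (1 / fact \<mu>) ^ k (\<mu> + 1))
        * (b * x) ^ wsum m k * exp (- real (N - k 0) * b * x))"
      by (simp only: m)
  qed
  finally show ?thesis using m by simp
qed

section \<open>The density of \<open>min {a\<^sub>2 g\<^sub>s\<^sub>r, g\<^sub>r\<^sub>d}\<close>\<close>

locale relay_gain_params =
  fixes Nr Nd msr mrd :: nat and \<Omega>sr \<Omega>rd a2 :: real
  assumes Nr_pos: "Nr > 0" and Nd_pos: "Nd > 0" and msr_pos: "msr > 0" and mrd_pos: "mrd > 0"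
    and \<Omega>sr_pos: "\<Omega>sr > 0" and \<Omega>rd_pos: "\<Omega>rd > 0" and a2_pos: "0 < a2"
begin

definition "rate_sr = real msr / \<Omega>sr"
definition "rate_rd = real mrd / \<Omega>rd"

lemma rate_sr_pos: "0 < rate_sr" and rate_rd_pos: "0 < rate_rd"
  using msr_pos mrd_pos \<Omega>sr_pos \<Omega>rd_pos by (simp_all add: rate_sr_def rate_rd_def)

text \<open>For \<open>x \<ge> 0\<close> this is the probability that \<open>min {a\<^sub>2 g\<^sub>s\<^sub>r, g\<^sub>r\<^sub>d}\<close> exceeds \<open>x\<close>.\<close>

definition survival :: "real \<Rightarrow> real" where
  "survival x = (1 - erlang_cdf_ext (msr - 1) rate_sr (x / a2) ^ Nr) * (1 - erlang_cdf_ext (mrd - 1) rate_rd x ^ Nd)"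

definition alpha :: "(nat \<Rightarrow> nat) \<Rightarrow> (nat \<Rightarrow> nat) \<Rightarrow> real" where
  "alpha k q = (real Nr - real (k 0)) * real msr / (a2 * \<Omega>sr) + (real Nd - real (q 0)) * real mrd / \<Omega>rd"

definition deg :: "(nat \<Rightarrow> nat) \<Rightarrow> (nat \<Rightarrow> nat) \<Rightarrow> nat" where
  "deg k q = wsum msr k + wsum mrd q"

definition coef :: "(nat \<Rightarrow> nat) \<Rightarrow> (nat \<Rightarrow> nat) \<Rightarrow> real" where
  "coef k q = multinom Nr msr k * multinom Nd mrd q * (-1) ^ (Nr - k 0 + (Nd - q 0))
       * (\<Prod>\<mu><msr. (1 / fact \<mu>) ^ k (\<mu> + 1)) * (real msr / (a2 * \<Omega>sr)) ^ wsum msr k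
       * (\<Prod>\<epsilon><mrd. (1 / fact \<epsilon>) ^ q (\<epsilon> + 1)) * (real mrd / \<Omega>rd) ^ wsum mrd q"

definition survival_series :: "real \<Rightarrow> real" where
  "survival_series x = (\<Sum>k\<in>tuples Nr msr. \<Sum>q\<in>tuples Nd mrd. coef k q * (x ^ deg k q * exp (- alpha k q * x)))"

definition density_series :: "real \<Rightarrow> real" where
  "density_series x = (\<Sum>k\<in>tuples Nr msr. \<Sum>q\<in>tuples Nd mrd. coef k q *
      ((alpha k q * x ^ deg k q - real (deg k q) * x ^ (deg k q - 1)) * exp (- alpha k q * x)))"

definition density_factored :: "real \<Rightarrow> real" where
  "density_factored x =
     real Nr * erlang_cdf_ext (msr - 1) rate_sr (x / a2) ^ (Nr - 1) * (erlang_density_ext (msr - 1) rate_sr (x / a2) / a2)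
       * (1 - erlang_cdf_ext (mrd - 1) rate_rd x ^ Nd)
     + (1 - erlang_cdf_ext (msr - 1) rate_sr (x / a2) ^ Nr)
       * (real Nd * erlang_cdf_ext (mrd - 1) rate_rd x ^ (Nd - 1) * erlang_density_ext (mrd - 1) rate_rd x)"

lemma alpha_pos: "k \<in> tuples Nr msr \<Longrightarrow> q \<in> tuples Nd mrd \<Longrightarrow> 0 < alpha k q"
  using tuples_0_less[of k Nr msr] tuples_0_less[of q Nd mrd] msr_pos mrd_pos a2_pos \<Omega>sr_pos \<Omega>rd_pos
  unfolding alpha_def by (intro add_pos_pos divide_pos_pos mult_pos_pos) auto

lemma survival_eq_series: "survival x = survival_series x"
proof -
  have "survival x = (\<Sum>k\<in>tuples Nr msr. multinom Nr msr k * ((-1) ^ (Nr - k 0)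
      * (\<Prod>\<mu><msr. (1 / fact \<mu>) ^ k (\<mu> + 1)) * (rate_sr * (x / a2)) ^ wsum msr k
      * exp (- real (Nr - k 0) * rate_sr * (x / a2))))
    * (\<Sum>q\<in>tuples Nd mrd. multinom Nd mrd q * ((-1) ^ (Nd - q 0)
      * (\<Prod>\<mu><mrd. (1 / fact \<mu>) ^ q (\<mu> + 1)) * (rate_rd * x) ^ wsum mrd q
      * exp (- real (Nd - q 0) * rate_rd * x)))"
    unfolding survival_def one_minus_erlang_cdf_ext_power[OF msr_pos]
      one_minus_erlang_cdf_ext_power[OF mrd_pos] by simp
  also have "\<dots> = survival_series x"
    unfolding survival_series_def sum_product
  proof (intro sum.cong refl)
    fix k q assume k: "k \<in> tuples Nr msr" and q: "q \<in> tuples Nd mrd"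
    have "real (Nr - k 0) = real Nr - real (k 0)" "real (Nd - q 0) = real Nd - real (q 0)"
      using tuples_0_less[OF k] tuples_0_less[OF q] by simp_all
    then have "exp (- real (Nr - k 0) * rate_sr * (x / a2)) * exp (- real (Nd - q 0) * rate_rd * x)
        = exp (- alpha k q * x)"
      unfolding exp_add[symmetric] alpha_def rate_sr_def rate_rd_def
      using \<Omega>sr_pos \<Omega>rd_pos a2_pos by (simp add: field_simps)
    moreover have "(rate_sr * (x / a2)) ^ wsum msr k * (rate_rd * x) ^ wsum mrd q
        = (real msr / (a2 * \<Omega>sr)) ^ wsum msr k * (real mrd / \<Omega>rd) ^ wsum mrd q * x ^ deg k q"
      unfolding deg_def rate_sr_def rate_rd_def power_add by (simp add: power_mult_distrib field_simps)
    ultimately show "multinom Nr msr k * ((-1) ^ (Nr - k 0)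
        * (\<Prod>\<mu><msr. (1 / fact \<mu>) ^ k (\<mu> + 1)) * (rate_sr * (x / a2)) ^ wsum msr k
        * exp (- real (Nr - k 0) * rate_sr * (x / a2)))
      * (multinom Nd mrd q * ((-1) ^ (Nd - q 0)
        * (\<Prod>\<mu><mrd. (1 / fact \<mu>) ^ q (\<mu> + 1)) * (rate_rd * x) ^ wsum mrd q
        * exp (- real (Nd - q 0) * rate_rd * x)))
      = coef k q * (x ^ deg k q * exp (- alpha k q * x))"
      unfolding coef_def power_add by (simp add: ac_simps)
  qed
  finally show ?thesis .
qed

lemma survival_0: "survival 0 = 1"
  using Nr_pos Nd_pos by (simp add: survival_def zero_power)

lemma has_real_derivative_survival_series:
  "(survival_series has_real_derivative - density_series x) (at x)"
proof -
  have "(survival_series has_real_derivative (\<Sum>k\<in>tuples Nr msr. \<Sum>q\<in>tuples Nd mrd. coef k q *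
      ((real (deg k q) * x ^ (deg k q - 1) - alpha k q * x ^ deg k q) * exp (- alpha k q * x)))) (at x)"
    unfolding survival_series_def[abs_def]
    by (intro DERIV_sum DERIV_cmult) (auto intro!: derivative_eq_intros simp: algebra_simps)
  then show ?thesis
    unfolding density_series_def sum_negf[symmetric] by (simp add: algebra_simps)
qed

lemma has_real_derivative_survival: "(survival has_real_derivative - density_factored x) (at x)"
proof -
  let ?F1 = "\<lambda>x. erlang_cdf_ext (msr - 1) rate_sr (x / a2)" and ?F2 = "erlang_cdf_ext (mrd - 1) rate_rd"
  have dF1: "(?F1 has_real_derivative erlang_density_ext (msr - 1) rate_sr (x / a2) * (1 / a2)) (at x)"
    using a2_pos
    by (intro DERIV_chain2[OF has_real_derivative_erlang_cdf_ext]) (auto intro!: derivative_eq_intros)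
  have "((\<lambda>x. 1 - ?F1 x ^ Nr) has_real_derivative
      0 - real Nr * (erlang_density_ext (msr - 1) rate_sr (x / a2) * (1 / a2) * ?F1 x ^ (Nr - Suc 0))) (at x)"
    by (rule DERIV_diff[OF DERIV_const DERIV_power[OF dF1]])
  moreover have "((\<lambda>x. 1 - ?F2 x ^ Nd) has_real_derivative
      0 - real Nd * (erlang_density_ext (mrd - 1) rate_rd x * ?F2 x ^ (Nd - Suc 0))) (at x)"
    by (intro DERIV_diff DERIV_const DERIV_power has_real_derivative_erlang_cdf_ext)
  ultimately show ?thesis
    using DERIV_mult unfolding survival_def[abs_def] density_factored_def
    by (fastforce simp: algebra_simps)
qed

lemma density_series_eq_factored: "density_series x = density_factored x"
  using DERIV_unique[OF has_real_derivative_survival_series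
      has_real_derivative_survival[unfolded survival_eq_series[abs_def]]]
  by simp

lemma density_series_nonneg:
  assumes x: "0 \<le> x"
  shows "0 \<le> density_series x"
proof -
  have xa: "0 \<le> x / a2" using x a2_pos by simp
  let ?F1 = "erlang_cdf_ext (msr - 1) rate_sr (x / a2)" and ?F2 = "erlang_cdf_ext (mrd - 1) rate_rd x"
  have F: "0 \<le> ?F1" "?F1 \<le> 1" "0 \<le> ?F2" "?F2 \<le> 1"
    using erlang_cdf_ext_nonneg[OF rate_sr_pos xa] erlang_cdf_ext_le_1[OF less_imp_le[OF rate_sr_pos] xa]
      erlang_cdf_ext_nonneg[OF rate_rd_pos x] erlang_cdf_ext_le_1[OF less_imp_le[OF rate_rd_pos] x]
    by auto
  then have "?F1 ^ Nr \<le> 1" "?F2 ^ Nd \<le> 1" by (simp_all add: power_le_one)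
  moreover have "0 \<le> erlang_density_ext (msr - 1) rate_sr (x / a2)" "0 \<le> erlang_density_ext (mrd - 1) rate_rd x"
    using erlang_density_ext_nonneg[OF less_imp_le[OF rate_sr_pos] xa]
      erlang_density_ext_nonneg[OF less_imp_le[OF rate_rd_pos] x] by auto
  ultimately show ?thesis unfolding density_series_eq_factored density_factored_def
    using F a2_pos by (intro add_nonneg_nonneg mult_nonneg_nonneg) auto
qed

definition pdf :: "real \<Rightarrow> real" where "pdf x = indicator {0..} x * density_series x"

lemma pdf_nonneg: "0 \<le> pdf x"
  using density_series_nonneg[of x] by (simp add: pdf_def indicator_def)

lemma pdf_mult_eq_sum: "pdf x * g x = (\<Sum>k\<in>tuples Nr msr. \<Sum>q\<in>tuples Nd mrd. coef k q *
    (indicator {0..} x * ((alpha k q * x ^ deg k q - real (deg k q) * x ^ (deg k q - 1))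
      * exp (- alpha k q * x)) * g x))"
  unfolding pdf_def density_series_def sum_distrib_left sum_distrib_right
  by (intro sum.cong refl) (simp add: ac_simps)

lemma integrable_pdf_mult:
  assumes "\<And>a p. 0 < a \<Longrightarrow> integrable lborel (\<lambda>x. indicator {0..} x * x ^ p * exp (- a * x) * g x)"
  shows "integrable lborel (\<lambda>x. pdf x * g x)"
  unfolding pdf_mult_eq_sum
  by (intro Bochner_Integration.integrable_sum Bochner_Integration.integrable_mult_right
      integrable_diff_pow_exp_mult assms alpha_pos)

lemma integrable_pdf_ln: "integrable lborel (\<lambda>x. pdf x * ln x)"
  by (rule integrable_pdf_mult) (rule integrable_pow_exp_ln)

lemma integrable_pdf_mult_id: "integrable lborel (\<lambda>x. pdf x * x)"
proof (rule integrable_pdf_mult)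
  fix a :: real and p assume "0 < a"
  from integrable_pow_exp[OF this, of "Suc p"]
  show "integrable lborel (\<lambda>x. indicator {0..} x * x ^ p * exp (- a * x) * x)"
    by (simp add: mult_ac)
qed

lemma limit_const_eq_integral_pdf_ln:
  "limit_const Nr Nd msr mrd \<Omega>sr \<Omega>rd a2 = (\<integral>x. pdf x * ln x \<partial>lborel) / (2 * ln 2)"
proof -
  have "(\<integral>x. pdf x * ln x \<partial>lborel) = (\<Sum>k\<in>tuples Nr msr. \<Sum>q\<in>tuples Nd mrd. coef k q *
      (\<integral>x. indicator {0..} x * ((alpha k q * x ^ deg k q - real (deg k q) * x ^ (deg k q - 1))
        * exp (- alpha k q * x)) * ln x \<partial>lborel))"
    unfolding pdf_mult_eq_sum
    by (intro integral_sum_sum_mult finite_tuples integrable_diff_pow_exp_mult integrable_pow_exp_ln alpha_pos)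
  also have "\<dots> = (\<Sum>k\<in>tuples Nr msr. \<Sum>q\<in>tuples Nd mrd. coef k q *
      (1 / alpha k q ^ deg k q * (Gamma (real (deg k q) + 1) * (Digamma (real (deg k q) + 1) - ln (alpha k q))
        - (if deg k q = 0 then 0
           else real (deg k q) * Gamma (real (deg k q)) * (Digamma (real (deg k q)) - ln (alpha k q))))))"
    using integral_ln_diff_pow_exp[OF alpha_pos] by (intro sum.cong refl) (simp add: ac_simps)
  finally show ?thesis
    unfolding limit_const_def Let_def coef_def alpha_def deg_def by (simp add: mult.assoc)
qed

end

lemma (in prob_space) prob_indep_vars_all_le:
  fixes X :: "'i \<Rightarrow> 'a \<Rightarrow> real"
  assumes "indep_vars (\<lambda>_. borel) X I" "J \<subseteq> I" "J \<noteq> {}" "finite J"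
  shows "prob {\<omega> \<in> space M. \<forall>j\<in>J. X j \<omega> \<le> c j} = (\<Prod>j\<in>J. prob {\<omega> \<in> space M. X j \<omega> \<le> c j})"
proof -
  have "indep_events (\<lambda>j. {\<omega> \<in> space M. X j \<omega> \<le> c j}) I"
    by (rule indep_eventsI_indep_vars[OF assms(1)]) simp
  then have "prob (\<Inter>j\<in>J. {\<omega> \<in> space M. X j \<omega> \<le> c j}) = (\<Prod>j\<in>J. prob {\<omega> \<in> space M. X j \<omega> \<le> c j})"
    using assms(2-4) unfolding indep_events_def by blast
  moreover have "(\<Inter>j\<in>J. {\<omega> \<in> space M. X j \<omega> \<le> c j}) = {\<omega> \<in> space M. \<forall>j\<in>J. X j \<omega> \<le> c j}"
    using assms(3) by blast
  ultimately show ?thesis by simp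
qed

lemma (in prob_space) distributed_of_survival:
  fixes Y :: "'a \<Rightarrow> real" and S f :: "real \<Rightarrow> real"
  assumes [measurable]: "Y \<in> borel_measurable M" "f \<in> borel_measurable borel"
    and deriv: "\<And>x. (S has_real_derivative - f x) (at x)"
    and f_nonneg: "\<And>x. 0 \<le> x \<Longrightarrow> 0 \<le> f x"
    and S_0: "S 0 = 1"
    and prob_le: "\<And>t. 0 \<le> t \<Longrightarrow> prob {\<omega> \<in> space M. Y \<omega> \<le> t} = 1 - S t"
  shows "distributed M lborel Y (\<lambda>x. indicator {0..} x * f x)"
proof (rule distributedI_borel_atMost[where g="\<lambda>t. if 0 \<le> t then 1 - S t else 0"])
  show "(\<integral>\<^sup>+x. ennreal (indicator {0..} x * f x * indicator {..t} x) \<partial>lborel)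
      = ennreal (if 0 \<le> t then 1 - S t else 0)" for t
  proof (cases "0 \<le> t")
    case True
    have "(\<integral>\<^sup>+x. ennreal (indicator {0..} x * f x * indicator {..t} x) \<partial>lborel)
        = (\<integral>\<^sup>+x. ennreal (f x) * indicator {0..t} x \<partial>lborel)"
      by (intro nn_integral_cong) (auto simp: indicator_def)
    also have "\<dots> = ennreal (- S t - - S 0)"
      using DERIV_minus[OF deriv] f_nonneg True by (intro nn_integral_FTC_Icc) auto
    finally show ?thesis using True S_0 by simp
  next
    case False
    then have "ennreal (indicator {0..} x * f x * indicator {..t} x) = 0" for x
      by (simp add: indicator_def)
    with False show ?thesis by simp
  qed
  show "emeasure M {\<omega> \<in> space M. Y \<omega> \<le> t} = ennreal (if 0 \<le> t then 1 - S t else 0)" for t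
  proof (cases "0 \<le> t")
    case False
    have "prob {\<omega> \<in> space M. Y \<omega> \<le> t} \<le> prob {\<omega> \<in> space M. Y \<omega> \<le> 0}"
      using False by (intro finite_measure_mono) auto
    then have "prob {\<omega> \<in> space M. Y \<omega> \<le> t} = 0"
      using prob_le[of 0] S_0 measure_nonneg[of M] by (simp add: antisym)
    then show ?thesis using False by (simp add: emeasure_eq_measure)
  qed (simp add: emeasure_eq_measure prob_le)
qed (auto simp: indicator_def intro!: AE_I2 f_nonneg)

lemma abs_ln_inverse_add_le:
  fixes x r :: real
  assumes "0 < x" "1 \<le> r"
  shows "\<bar>ln (1 / r + x)\<bar> \<le> \<bar>ln x\<bar> + x"
proof -
  have "ln x \<le> ln (1 / r + x)" "ln (1 / r + x) \<le> ln (1 + x)"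
    using assms by (subst ln_le_cancel_iff; auto intro: add_pos_pos)+
  moreover have "ln (1 + x) \<le> x" using assms by (intro ln_add_one_self_le_self) simp
  ultimately show ?thesis
    using abs_ge_self[of "ln x"] abs_ge_minus_self[of "ln x"] assms(1) unfolding abs_le_iff by linarith
qed

lemma
  fixes f :: "real \<Rightarrow> real"
  assumes [measurable]: "f \<in> borel_measurable borel"
    and f_nonneg: "\<And>x. 0 \<le> f x" and f_neg: "\<And>x. x < 0 \<Longrightarrow> f x = 0"
    and int_ln: "integrable lborel (\<lambda>x. f x * ln x)" and int_id: "integrable lborel (\<lambda>x. f x * x)"
  shows integrable_mult_ln_inverse_add: "1 \<le> r \<Longrightarrow> integrable lborel (\<lambda>x. f x * ln (1 / r + x))"
    and tendsto_integral_mult_ln_inverse_add: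
      "((\<lambda>r. \<integral>x. f x * ln (1 / r + x) \<partial>lborel) \<longlongrightarrow> \<integral>x. f x * ln x \<partial>lborel) at_top"
proof -
  let ?w = "\<lambda>x. \<bar>f x * ln x\<bar> + f x * x"
  have int_w: "integrable lborel ?w"
    using int_ln int_id by (intro Bochner_Integration.integrable_add integrable_abs)
  have bound: "AE x in lborel. norm (f x * ln (1 / r + x)) \<le> ?w x" if r: "1 \<le> r" for r
    using AE_lborel_singleton[of 0]
  proof eventually_elim
    case (elim x)
    show ?case
    proof (cases "0 < x")
      case True
      have "f x * \<bar>ln (1 / r + x)\<bar> \<le> f x * (\<bar>ln x\<bar> + x)"
        using f_nonneg[of x] abs_ln_inverse_add_le[OF True r] by (intro mult_left_mono) auto
      then show ?thesis using f_nonneg[of x] by (simp add: abs_mult algebra_simps)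
    qed (use elim f_neg in simp)
  qed
  show "integrable lborel (\<lambda>x. f x * ln (1 / r + x))" if "1 \<le> r"
    using bound[OF that]
    by (intro Bochner_Integration.integrable_bound[OF int_w])
      (auto elim!: eventually_mono intro: order_trans[OF _ abs_ge_self])
  show "((\<lambda>r. \<integral>x. f x * ln (1 / r + x) \<partial>lborel) \<longlongrightarrow> \<integral>x. f x * ln x \<partial>lborel) at_top"
  proof (rule integral_dominated_convergence_at_top[where w="?w"])
    show "AE x in lborel. ((\<lambda>r. f x * ln (1 / r + x)) \<longlongrightarrow> f x * ln x) at_top"
      using AE_lborel_singleton[of 0]
    proof eventually_elim
      case (elim x)
      show ?case
      proof (cases "0 < x")
        case True
        have "((\<lambda>r::real. 1 / r + x) \<longlongrightarrow> 0 + x) at_top"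
          by (intro tendsto_add tendsto_const tendsto_divide_0[OF tendsto_const]
              filterlim_at_top_imp_at_infinity filterlim_ident)
        then show ?thesis using True by (intro tendsto_mult tendsto_const tendsto_ln) auto
      qed (use elim f_neg in simp)
    qed
    show "\<forall>\<^sub>F r in at_top. AE x in lborel. norm (f x * ln (1 / r + x)) \<le> ?w x"
      using eventually_ge_at_top[of "1::real"] by eventually_elim (rule bound)
  qed (use int_w in simp_all)
qed

lemma (in prob_space) expectation_log_one_add_mult:
  fixes Y :: "'a \<Rightarrow> real" and f :: "real \<Rightarrow> real"
  assumes Y: "distributed M lborel Y f"
    and f_nonneg: "\<And>x. 0 \<le> f x" and f_neg: "\<And>x. x < 0 \<Longrightarrow> f x = 0"
    and r: "1 \<le> r" and int: "integrable lborel (\<lambda>x. f x * ln (1 / r + x))"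
  shows "(\<integral>\<omega>. log 2 (1 + r * Y \<omega>) \<partial>M) = log 2 r + (\<integral>x. f x * ln (1 / r + x) \<partial>lborel) / ln 2"
proof -
  have "f x * log 2 (1 + r * x) = log 2 r * f x + f x * ln (1 / r + x) / ln 2" for x
  proof (cases "0 \<le> x")
    case True
    have "0 < 1 / r + x" using r True by (simp add: add_pos_nonneg)
    moreover have "1 + r * x = r * (1 / r + x)" using r by (simp add: field_simps)
    ultimately have "ln (1 + r * x) = ln r + ln (1 / r + x)" using r by (simp add: ln_mult)
    then show ?thesis by (simp add: log_def add_divide_distrib algebra_simps)
  qed (simp add: f_neg)
  then have "(\<integral>\<omega>. log 2 (1 + r * Y \<omega>) \<partial>M) = (\<integral>x. log 2 r * f x + f x * ln (1 / r + x) / ln 2 \<partial>lborel)"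
    using distributed_integral[OF Y, of "\<lambda>x. log 2 (1 + r * x)"] f_nonneg by simp
  moreover have "integrable lborel f" "(\<integral>x. f x \<partial>lborel) = 1"
    using distributed_integrable[OF Y, of "\<lambda>_. 1"] distributed_integral[OF Y, of "\<lambda>_. 1"] f_nonneg
    by (simp_all add: prob_space)
  ultimately show ?thesis using int by simp
qed

lemma (in prob_space) tendsto_expectation_log_minus_log:
  fixes Y :: "'a \<Rightarrow> real" and f :: "real \<Rightarrow> real"
  assumes Y: "distributed M lborel Y f"
    and f_nonneg: "\<And>x. 0 \<le> f x" and f_neg: "\<And>x. x < 0 \<Longrightarrow> f x = 0"
    and int_ln: "integrable lborel (\<lambda>x. f x * ln x)" and int_id: "integrable lborel (\<lambda>x. f x * x)"
  shows "((\<lambda>r. (\<integral>\<omega>. log 2 (1 + r * Y \<omega>) \<partial>M) - log 2 r) \<longlongrightarrow> (\<integral>x. f x * ln x \<partial>lborel) / ln 2) at_top"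
proof -
  have "integrable lborel f"
    using distributed_integrable[OF Y, of "\<lambda>_. 1"] f_nonneg by (simp add: prob_space)
  then have f_meas: "f \<in> borel_measurable borel"
    using borel_measurable_integrable by simp
  have int_shift: "integrable lborel (\<lambda>x. f x * ln (1 / r + x))" if "1 \<le> r" for r
    using f_meas f_nonneg f_neg int_ln int_id that by (rule integrable_mult_ln_inverse_add)
  have "\<forall>\<^sub>F r in at_top. (\<integral>x. f x * ln (1 / r + x) \<partial>lborel) / ln 2
      = (\<integral>\<omega>. log 2 (1 + r * Y \<omega>) \<partial>M) - log 2 r"
    using eventually_ge_at_top[of "1::real"]
    by eventually_elim (simp add: expectation_log_one_add_mult[OF Y f_nonneg f_neg _ int_shift])
  moreover have "((\<lambda>r. \<integral>x. f x * ln (1 / r + x) \<partial>lborel) \<longlongrightarrow> \<integral>x. f x * ln x \<partial>lborel) at_top"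
    using f_meas f_nonneg f_neg int_ln int_id by (rule tendsto_integral_mult_ln_inverse_add)
  ultimately show ?thesis
    by (intro Lim_transform_eventually[OF tendsto_divide[OF _ tendsto_const]]) simp_all
qed

lemma log_sinr_bounds:
  fixes a1 a2 r z :: real
  assumes "0 < a1" "0 < a2" "0 \<le> r" "0 \<le> z"
  shows "0 \<le> log 2 (1 + a1 * r * z / (a2 * r * z + 1))"
    and "log 2 (1 + a1 * r * z / (a2 * r * z + 1)) \<le> log 2 (1 + a1 / a2)"
proof -
  have pos: "0 < a2 * r * z + 1" using assms by (simp add: add_nonneg_pos)
  then have nonneg: "0 \<le> a1 * r * z / (a2 * r * z + 1)" using assms by simp
  then show "0 \<le> log 2 (1 + a1 * r * z / (a2 * r * z + 1))" by simp
  have "a1 * r * z * a2 \<le> a1 * (a2 * r * z + 1)" using assms by (simp add: algebra_simps)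
  then have "a1 * r * z / (a2 * r * z + 1) \<le> a1 / a2"
    using pos assms by (simp add: divide_simps mult.commute)
  with nonneg show "log 2 (1 + a1 * r * z / (a2 * r * z + 1)) \<le> log 2 (1 + a1 / a2)" by simp
qed

lemma (in prob_space) abs_expectation_log_sinr_le:
  fixes X :: "'a \<Rightarrow> real"
  assumes [measurable]: "X \<in> borel_measurable M" and X: "AE \<omega> in M. 0 \<le> X \<omega>"
    and "0 < a1" "0 < a2" "0 \<le> r"
  shows "\<bar>\<integral>\<omega>. log 2 (1 + a1 * r * X \<omega> / (a2 * r * X \<omega> + 1)) \<partial>M\<bar> \<le> log 2 (1 + a1 / a2)"
proof -
  let ?g = "\<lambda>\<omega>. log 2 (1 + a1 * r * X \<omega> / (a2 * r * X \<omega> + 1))"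
  have lower: "AE \<omega> in M. 0 \<le> ?g \<omega>" and upper: "AE \<omega> in M. ?g \<omega> \<le> log 2 (1 + a1 / a2)"
    using X by (auto elim!: eventually_mono intro: log_sinr_bounds[OF assms(3-5)])
  have "integrable M ?g"
    using lower upper by (intro integrable_const_bound[where B="log 2 (1 + a1 / a2)"]) auto
  then have "(\<integral>\<omega>. ?g \<omega> \<partial>M) \<le> (\<integral>\<omega>. log 2 (1 + a1 / a2) \<partial>M)"
    using upper by (intro integral_mono_AE) auto
  moreover have "0 \<le> (\<integral>\<omega>. ?g \<omega> \<partial>M)" using lower by (rule integral_nonneg_AE)
  ultimately show ?thesis by (simp add: prob_space)
qed

section \<open>The selection-combining relay channel\<close>

locale relay_channel = relay_gain_params Nr Nd msr mrd \<Omega>sr \<Omega>rd a2 + prob_space M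
  for Nr Nd msr mrd :: nat and \<Omega>sr \<Omega>rd a2 :: real and M :: "'a measure" +
  fixes Gsr Gsd Grd :: "nat \<Rightarrow> 'a \<Rightarrow> real" and msd :: nat and \<Omega>sd :: real
  assumes indep: "indep_vars (\<lambda>_. borel)
      (\<lambda>j. case j of Inl i \<Rightarrow> Gsr i | Inr (Inl i) \<Rightarrow> Gsd i | Inr (Inr i) \<Rightarrow> Grd i)
      (Inl ` {1..Nr} \<union> Inr ` (Inl ` {1..Nd} \<union> Inr ` {1..Nd}))"
    and dsr: "\<And>i. i \<in> {1..Nr} \<Longrightarrow> distributed M lborel (Gsr i) (\<lambda>x. ennreal (gamma_pdf msr \<Omega>sr x))"
    and dsd: "\<And>j. j \<in> {1..Nd} \<Longrightarrow> distributed M lborel (Gsd j) (\<lambda>x. ennreal (gamma_pdf msd \<Omega>sd x))"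
    and drd: "\<And>k. k \<in> {1..Nd} \<Longrightarrow> distributed M lborel (Grd k) (\<lambda>x. ennreal (gamma_pdf mrd \<Omega>rd x))"
begin

definition "gain j = (case j of Inl i \<Rightarrow> Gsr i | Inr (Inl i) \<Rightarrow> Gsd i | Inr (Inr i) \<Rightarrow> Grd i)"

definition "gsr = (\<lambda>\<omega>. Max ((\<lambda>i. Gsr i \<omega>) ` {1..Nr}))"
definition "gsd = (\<lambda>\<omega>. Max ((\<lambda>j. Gsd j \<omega>) ` {1..Nd}))"
definition "grd = (\<lambda>\<omega>. Max ((\<lambda>k. Grd k \<omega>) ` {1..Nd}))"
definition "Y = (\<lambda>\<omega>. min (a2 * gsr \<omega>) (grd \<omega>))"
definition "X = (\<lambda>\<omega>. min (gsr \<omega>) (gsd \<omega>))"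

lemma measurable_gains [measurable]:
  "i \<in> {1..Nr} \<Longrightarrow> Gsr i \<in> borel_measurable M"
  "j \<in> {1..Nd} \<Longrightarrow> Gsd j \<in> borel_measurable M"
  "k \<in> {1..Nd} \<Longrightarrow> Grd k \<in> borel_measurable M"
  using distributed_measurable[OF dsr] distributed_measurable[OF dsd] distributed_measurable[OF drd]
  by simp_all

lemma measurable_Y [measurable]: "Y \<in> borel_measurable M"
  and measurable_X [measurable]: "X \<in> borel_measurable M"
  unfolding Y_def X_def gsr_def gsd_def grd_def by measurable

lemma prob_gains_le:
  assumes "J \<subseteq> Inl ` {1..Nr} \<union> Inr ` Inr ` {1..Nd}" "J \<noteq> {}"
  shows "prob {\<omega> \<in> space M. \<forall>j\<in>J. gain j \<omega> \<le> c j} = (\<Prod>j\<in>J. prob {\<omega> \<in> space M. gain j \<omega> \<le> c j})"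
  using assms indep unfolding gain_def
  by (intro prob_indep_vars_all_le[where I="Inl ` {1..Nr} \<union> Inr ` (Inl ` {1..Nd} \<union> Inr ` {1..Nd})"])
    (auto intro: finite_subset)

lemma prob_Max_Gsr_le:
  assumes "0 \<le> x"
  shows "(\<Prod>j\<in>Inl ` {1..Nr}. prob {\<omega> \<in> space M. gain j \<omega> \<le> x}) = erlang_cdf_ext (msr - 1) rate_sr x ^ Nr"
  using prob_gamma_le[OF msr_pos \<Omega>sr_pos assms dsr]
  by (subst prod.reindex) (auto simp: gain_def rate_sr_def)

lemma prob_Max_Grd_le:
  assumes "0 \<le> x"
  shows "(\<Prod>j\<in>Inr ` Inr ` {1..Nd}. prob {\<omega> \<in> space M. gain j \<omega> \<le> x}) = erlang_cdf_ext (mrd - 1) rate_rd x ^ Nd"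
  using prob_gamma_le[OF mrd_pos \<Omega>rd_pos assms drd] unfolding image_image
  by (subst prod.reindex) (auto simp: gain_def rate_rd_def inj_on_def)

lemma gsr_le_iff: "gsr \<omega> \<le> x \<longleftrightarrow> (\<forall>j\<in>Inl ` {1..Nr}. gain j \<omega> \<le> x)"
  unfolding gsr_def gain_def using Nr_pos by (subst Max_le_iff) auto

lemma grd_le_iff: "grd \<omega> \<le> x \<longleftrightarrow> (\<forall>j\<in>Inr ` Inr ` {1..Nd}. gain j \<omega> \<le> x)"
  unfolding grd_def gain_def using Nd_pos by (subst Max_le_iff) auto

lemma prob_Y_le:
  assumes t: "0 \<le> t"
  shows "prob {\<omega> \<in> space M. Y \<omega> \<le> t} = 1 - survival t"
proof -
  let ?A = "{\<omega> \<in> space M. gsr \<omega> \<le> t / a2}" and ?B = "{\<omega> \<in> space M. grd \<omega> \<le> t}"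
  have ta: "0 \<le> t / a2" using t a2_pos by simp
  have [measurable]: "gsr \<in> borel_measurable M" "grd \<in> borel_measurable M"
    unfolding gsr_def grd_def by measurable
  have "{\<omega> \<in> space M. Y \<omega> \<le> t} = ?A \<union> ?B"
    using a2_pos by (auto simp: Y_def min_le_iff_disj pos_le_divide_eq mult.commute)
  then have "prob {\<omega> \<in> space M. Y \<omega> \<le> t} = prob ?A + prob ?B - prob (?A \<inter> ?B)"
    by (simp add: measure_Un3 fmeasurable_eq_sets)
  moreover have "prob ?A = erlang_cdf_ext (msr - 1) rate_sr (t / a2) ^ Nr"
    using prob_gains_le[of "Inl ` {1..Nr}" "\<lambda>_. t / a2"] prob_Max_Gsr_le[OF ta] Nr_pos
    by (simp add: gsr_le_iff)
  moreover have "prob ?B = erlang_cdf_ext (mrd - 1) rate_rd t ^ Nd"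
    using prob_gains_le[of "Inr ` Inr ` {1..Nd}" "\<lambda>_. t"] prob_Max_Grd_le[OF t] Nd_pos
    by (simp add: grd_le_iff)
  moreover have "prob (?A \<inter> ?B) = erlang_cdf_ext (msr - 1) rate_sr (t / a2) ^ Nr * erlang_cdf_ext (mrd - 1) rate_rd t ^ Nd"
  proof -
    let ?c = "\<lambda>j. case j of Inl _ \<Rightarrow> t / a2 | Inr _ \<Rightarrow> t"
    have "?A \<inter> ?B = {\<omega> \<in> space M. \<forall>j\<in>Inl ` {1..Nr} \<union> Inr ` Inr ` {1..Nd}. gain j \<omega> \<le> ?c j}"
      by (auto simp: gsr_le_iff grd_le_iff ball_Un)
    then have "prob (?A \<inter> ?B) = (\<Prod>j\<in>Inl ` {1..Nr} \<union> Inr ` Inr ` {1..Nd}. prob {\<omega> \<in> space M. gain j \<omega> \<le> ?c j})"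
      using prob_gains_le[of _ ?c] Nr_pos by simp
    also have "\<dots> = (\<Prod>j\<in>Inl ` {1..Nr}. prob {\<omega> \<in> space M. gain j \<omega> \<le> t / a2})
        * (\<Prod>j\<in>Inr ` Inr ` {1..Nd}. prob {\<omega> \<in> space M. gain j \<omega> \<le> t})"
      by (subst prod.union_disjoint) (auto intro!: arg_cong2[where f="(*)"] prod.cong)
    finally show ?thesis using prob_Max_Gsr_le[OF ta] prob_Max_Grd_le[OF t] by simp
  qed
  ultimately show ?thesis by (simp add: survival_def algebra_simps)
qed

lemma distributed_Y: "distributed M lborel Y pdf"
proof -
  have [measurable]: "density_series \<in> borel_measurable borel" unfolding density_series_def by measurable
  have "distributed M lborel Y (\<lambda>x. indicator {0..} x * density_series x)"
    using has_real_derivative_survival_series density_series_nonneg prob_Y_le survival_0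
    by (intro distributed_of_survival) (simp_all add: survival_eq_series)
  then show ?thesis by (simp add: pdf_def[abs_def])
qed

lemma tendsto_capacity_minus_log:
  "((\<lambda>r. 1/2 * (\<integral>\<omega>. log 2 (1 + r * Y \<omega>) \<partial>M) - 1/2 * log 2 r)
     \<longlongrightarrow> limit_const Nr Nd msr mrd \<Omega>sr \<Omega>rd a2) at_top"
proof -
  have "((\<lambda>r. (\<integral>\<omega>. log 2 (1 + r * Y \<omega>) \<partial>M) - log 2 r) \<longlongrightarrow> (\<integral>x. pdf x * ln x \<partial>lborel) / ln 2) at_top"
    by (intro tendsto_expectation_log_minus_log distributed_Y pdf_nonneg integrable_pdf_ln
        integrable_pdf_mult_id) (simp add: pdf_def)
  from tendsto_mult[OF tendsto_const this, of "1/2"] show ?thesis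
    by (simp add: limit_const_eq_integral_pdf_ln right_diff_distrib)
qed

lemma AE_X_nonneg: "AE \<omega> in M. 0 \<le> X \<omega>"
proof -
  have "1 \<in> {1..Nr}" "1 \<in> {1..Nd}" using Nr_pos Nd_pos by auto
  from AE_gamma_nonneg[OF dsr[OF this(1)]] AE_gamma_nonneg[OF dsd[OF this(2)]]
  show ?thesis
  proof eventually_elim
  case (elim \<omega>)
  have "Gsr 1 \<omega> \<le> gsr \<omega>" "Gsd 1 \<omega> \<le> gsd \<omega>"
    unfolding gsr_def gsd_def using Nr_pos Nd_pos by (auto intro: Max_ge)
  with elim show ?case by (simp add: X_def)
qed
qed

end

theorem mainTheorem6:
  fixes M :: "'a measure"
    and Gsr Gsd Grd :: "nat \<Rightarrow> 'a \<Rightarrow> real"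
    and Nr Nd msr msd mrd :: nat
    and \<Omega>sr \<Omega>sd \<Omega>rd a1 a2 :: real
  assumes "prob_space M"
    and "Nr > 0" "Nd > 0" "msr > 0" "msd > 0" "mrd > 0"
    and "\<Omega>sr > 0" "\<Omega>sd > 0" "\<Omega>rd > 0"
    and "0 < a1" "a1 < 1" "0 < a2" "a2 < 1" "a1 + a2 = 1" "a1 > a2"
    and indep: "prob_space.indep_vars M (\<lambda>_. borel)
          (\<lambda>j. case j of Inl i \<Rightarrow> Gsr i | Inr (Inl i) \<Rightarrow> Gsd i | Inr (Inr i) \<Rightarrow> Grd i)
          (Inl ` {1..Nr} \<union> Inr ` (Inl ` {1..Nd} \<union> Inr ` {1..Nd}))"
    and dsr: "\<And>i. i \<in> {1..Nr} \<Longrightarrow>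
          distributed M lborel (Gsr i) (\<lambda>x. ennreal (gamma_pdf msr \<Omega>sr x))"
    and dsd: "\<And>j. j \<in> {1..Nd} \<Longrightarrow>
          distributed M lborel (Gsd j) (\<lambda>x. ennreal (gamma_pdf msd \<Omega>sd x))"
    and drd: "\<And>k. k \<in> {1..Nd} \<Longrightarrow>
          distributed M lborel (Grd k) (\<lambda>x. ennreal (gamma_pdf mrd \<Omega>rd x))"
    and gsr_def: "gsr = (\<lambda>\<omega>. Max ((\<lambda>i. Gsr i \<omega>) ` {1..Nr}))"
    and gsd_def: "gsd = (\<lambda>\<omega>. Max ((\<lambda>j. Gsd j \<omega>) ` {1..Nd}))"
    and grd_def: "grd = (\<lambda>\<omega>. Max ((\<lambda>k. Grd k \<omega>) ` {1..Nd}))"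
    and Y_def: "Y = (\<lambda>\<omega>. min (a2 * gsr \<omega>) (grd \<omega>))"
    and X_def: "X = (\<lambda>\<omega>. min (gsr \<omega>) (gsd \<omega>))"
    and C2_def: "C2 = (\<lambda>\<rho>::real. 1/2 * (\<integral>\<omega>. log 2 (1 + \<rho> * Y \<omega>) \<partial>M))"
    and C1_def: "C1 = (\<lambda>\<rho>::real. 1/2 *
          (\<integral>\<omega>. log 2 (1 + a1 * \<rho> * X \<omega> / (a2 * \<rho> * X \<omega> + 1)) \<partial>M))"
  shows "((\<lambda>\<rho>. C2 \<rho> - 1/2 * log 2 \<rho>)
            \<longlongrightarrow> limit_const Nr Nd msr mrd \<Omega>sr \<Omega>rd a2) at_top
         \<and> (\<lambda>\<rho>. C1 \<rho> + C2 \<rho> - 1/2 * log 2 \<rho>) \<in> O[at_top](\<lambda>_. 1)"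
proof -
  interpret P: relay_channel Nr Nd msr mrd \<Omega>sr \<Omega>rd a2 M Gsr Gsd Grd msd \<Omega>sd
    using assms(1-9,12) indep dsr dsd drd
    by (simp add: relay_channel_def relay_channel_axioms_def relay_gain_params_def)
  have Y_eq: "Y = P.Y" and X_eq: "X = P.X"
    by (simp_all add: Y_def X_def gsr_def gsd_def grd_def P.Y_def P.X_def P.gsr_def P.gsd_def P.grd_def)
  have C2_lim: "((\<lambda>\<rho>. C2 \<rho> - 1/2 * log 2 \<rho>) \<longlongrightarrow> limit_const Nr Nd msr mrd \<Omega>sr \<Omega>rd a2) at_top"
    unfolding C2_def Y_eq by (rule P.tendsto_capacity_minus_log)
  then have C2_bigo: "(\<lambda>\<rho>. C2 \<rho> - 1/2 * log 2 \<rho>) \<in> O[at_top](\<lambda>_. 1)"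
    by (intro bigoI_tendsto[where c="limit_const Nr Nd msr mrd \<Omega>sr \<Omega>rd a2"]) simp_all
  have C1_bigo: "C1 \<in> O[at_top](\<lambda>_. 1)"
  proof (rule bigoI[where c="log 2 (1 + a1 / a2) / 2"])
    show "\<forall>\<^sub>F \<rho> in at_top. norm (C1 \<rho>) \<le> log 2 (1 + a1 / a2) / 2 * norm (1::real)"
      using eventually_ge_at_top[of "0::real"]
    proof eventually_elim
      case (elim \<rho>)
      from P.abs_expectation_log_sinr_le[OF P.measurable_X P.AE_X_nonneg assms(10,12) elim]
      show ?case by (simp add: C1_def X_eq)
    qed
  qed
  from sum_in_bigo(1)[OF C1_bigo C2_bigo] C2_lim show ?thesis by (simp add: add_diff_eq)
qed

end
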